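(* Let $\bm x \in \Delta_n \setminus \{\bm e_1,\dots,\bm e_n, \tfrac1n \bm e\}$. Then the function $F(p) = \dfrac{1 - \|\bm x\|_p}{D_p\,\|\bm x\|_p}$ is strictly decreasing in $p$ for $p \geqslant 2$.
   Context: For $\bm x \in \mathbb{R}^n_{\geqslant 0}$ and real $p\geqslant 1$, $\|\bm x\|_p = (\sum_{i=1}^n x_i^p)^{1/p}$, and $D_p = n^{1-1/p}-1$. $\Delta_n = \{\bm x \in \mathbb{R}^n_{\geqslant 0} : \sum_{i=1}^n x_i = 1\}$ is the probability simplex, $\bm e_i$ is the $i$-th standard unit vector and $\bm e$ the all-ones vector in $\mathbb{R}^n$. *)

theory Defs
  imports "HOL-Analysis.Analysis"
begin

text \<open>Vectors in R^n are modelled as functions nat => real, with coordinates indexed by {..<n}.\<close>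

definition prob_simplex :: "nat \<Rightarrow> (nat \<Rightarrow> real) set" where
  "prob_simplex n = {x. (\<forall>i<n. 0 \<le> x i) \<and> (\<Sum>i<n. x i) = 1}"

definition unit_vec :: "nat \<Rightarrow> nat \<Rightarrow> real" where
  "unit_vec i = (\<lambda>j. if j = i then 1 else 0)"

definition pnorm :: "nat \<Rightarrow> real \<Rightarrow> (nat \<Rightarrow> real) \<Rightarrow> real" where
  "pnorm n p x = (\<Sum>i<n. x i powr p) powr (1 / p)"

definition Dp :: "nat \<Rightarrow> real \<Rightarrow> real" where
  "Dp n p = real n powr (1 - 1 / p) - 1"

definition Ffun :: "nat \<Rightarrow> (nat \<Rightarrow> real) \<Rightarrow> real \<Rightarrow> real" where
  "Ffun n x p = (1 - pnorm n p x) / (Dp n p * pnorm n p x)"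

end

theory Submission
  imports Defs
begin

text \<open>With S r = (\<Sum>i<n. x i powr r), the Renyi entropy H r = ln (S r) / (1 - r) of x satisfies
  1 / pnorm r = exp ((1 - 1/r) * H r). Putting c r = n powr (1 - 1/r) and \<theta> r = H r / ln n, this
  gives F r = (c r powr \<theta> r - 1) / (c r - 1). For x neither a vertex nor the barycentre of the
  simplex, 0 < \<theta> r < 1; by the power mean inequality \<theta> is nonincreasing; and c is increasing.
  As t \<mapsto> t powr \<theta> is strictly concave, the slope (c powr \<theta> - 1) / (c - 1) of its chords
  issuing from 1 strictly decreases in c, so for 1 < p < q
  F q \<le> (c q powr \<theta> p - 1) / (c q - 1) < (c p powr \<theta> p - 1) / (c p - 1) = F p.
  The hypothesis 2 \<le> p is stronger than needed: only p > 1 is used.\<close>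

lemma bernoulli_powr_strict:
  fixes g s :: real
  assumes g: "g > 1" and s: "s \<ge> 0" "s \<noteq> 1"
  shows "1 + g * (s - 1) < s powr g"
proof (cases "s = 0")
  case True
  then show ?thesis using g by simp
next
  case False
  with s have "s > 0" by simp
  define f where "f t = t powr g - g * t" for t :: real
  have f': "(f has_real_derivative g * t powr (g - 1) - g) (at t)" if "t > 0" for t
    unfolding f_def using that by (auto intro!: derivative_eq_intros simp: powr_diff)
  show ?thesis
  proof (cases "s < 1")
    case True
    obtain z where z: "s < z" "z < 1" "f 1 - f s = (1 - s) * (g * z powr (g - 1) - g)"
      using MVT2[of s 1 f "\<lambda>t. g * t powr (g - 1) - g"] True \<open>s > 0\<close> f' by force
    have "z powr (g - 1) < 1" using z \<open>s > 0\<close> g by (simp add: powr01_less_one)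
    then have "f 1 - f s < 0" using z True g by (simp add: mult_pos_neg)
    then show ?thesis unfolding f_def by (simp add: algebra_simps)
  next
    case False
    with s have "s > 1" by simp
    obtain z where z: "1 < z" "z < s" "f s - f 1 = (s - 1) * (g * z powr (g - 1) - g)"
      using MVT2[of 1 s f "\<lambda>t. g * t powr (g - 1) - g"] \<open>s > 1\<close> f' by force
    have "z powr (g - 1) > 1" using z g by (simp add: gr_one_powr)
    then have "f s - f 1 > 0" using z \<open>s > 1\<close> g by simp
    then show ?thesis unfolding f_def by (simp add: algebra_simps)
  qed
qed

lemma bernoulli_powr:
  fixes g s :: real
  assumes "g > 1" and "s \<ge> 0"
  shows "1 + g * (s - 1) \<le> s powr g"
  using bernoulli_powr_strict[OF assms] by (cases "s = 1") auto

lemma bernoulli_powr_concave_strict: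
  fixes \<theta> s :: real
  assumes \<theta>: "0 < \<theta>" "\<theta> < 1" and s: "s > 0" "s \<noteq> 1"
  shows "s powr \<theta> < 1 + \<theta> * (s - 1)"
proof -
  define u where "u = s powr \<theta>"
  have "u > 0" using s by (simp add: u_def)
  have u_powr: "u powr (1 / \<theta>) = s" using s \<theta> by (simp add: u_def powr_powr)
  then have "u \<noteq> 1" using s by auto
  then have "1 + (1 / \<theta>) * (u - 1) < s"
    using bernoulli_powr_strict[of "1 / \<theta>" u] \<theta> \<open>u > 0\<close> u_powr by simp
  then show ?thesis using \<theta> by (simp add: u_def field_simps)
qed

text \<open>The tangent lines of t \<mapsto> t powr g at a > 0 are obtained by rescaling Bernoulli's inequality
  with t / a.\<close>

lemma powr_tangent_rescale:
  fixes g a t :: real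
  assumes "a > 0"
  shows "a powr g * (1 + g * (t / a - 1)) = a powr g + g * a powr (g - 1) * (t - a)"
  using assms by (simp add: powr_diff field_simps)

lemma powr_ge_tangent:
  fixes g a t :: real
  assumes g: "g > 1" and a: "a > 0" and t: "t \<ge> 0"
  shows "a powr g + g * a powr (g - 1) * (t - a) \<le> t powr g"
proof -
  have "a powr g * (1 + g * (t / a - 1)) \<le> a powr g * (t / a) powr g"
    using bernoulli_powr[OF g, of "t / a"] a t by (intro mult_left_mono) auto
  then show ?thesis using a t by (simp add: powr_tangent_rescale powr_divide)
qed

lemma powr_gt_tangent:
  fixes g a t :: real
  assumes g: "g > 1" and a: "a > 0" and t: "t \<ge> 0" "t \<noteq> a"
  shows "a powr g + g * a powr (g - 1) * (t - a) < t powr g"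
proof -
  have "a powr g * (1 + g * (t / a - 1)) < a powr g * (t / a) powr g"
    using bernoulli_powr_strict[OF g, of "t / a"] a t by (intro mult_strict_left_mono) auto
  then show ?thesis using a t by (simp add: powr_tangent_rescale powr_divide)
qed

lemma powr_concave_lt_tangent:
  fixes \<theta> a t :: real
  assumes \<theta>: "0 < \<theta>" "\<theta> < 1" and a: "a > 0" and t: "t > 0" "t \<noteq> a"
  shows "t powr \<theta> < a powr \<theta> + \<theta> * a powr (\<theta> - 1) * (t - a)"
proof -
  have "a powr \<theta> * (t / a) powr \<theta> < a powr \<theta> * (1 + \<theta> * (t / a - 1))"
    using bernoulli_powr_concave_strict[OF \<theta>, of "t / a"] a t by (intro mult_strict_left_mono) auto
  then show ?thesis using a t by (simp add: powr_tangent_rescale powr_divide)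
qed

lemma powr_chord_slope_from_one_decreasing:
  fixes \<theta> c1 c2 :: real
  assumes \<theta>: "0 < \<theta>" "\<theta> < 1" and c: "1 < c1" "c1 < c2"
  shows "(c2 powr \<theta> - 1) / (c2 - 1) < (c1 powr \<theta> - 1) / (c1 - 1)"
proof -
  define k where "k = \<theta> * c1 powr (\<theta> - 1)"
  have at_one: "1 < c1 powr \<theta> + k * (1 - c1)"
    using powr_concave_lt_tangent[OF \<theta>, of c1 1] c by (simp add: k_def mult.assoc)
  have at_c2: "c2 powr \<theta> < c1 powr \<theta> + k * (c2 - c1)"
    using powr_concave_lt_tangent[OF \<theta>, of c1 c2] c by (simp add: k_def mult.assoc)
  have "(c2 powr \<theta> - 1) * (c1 - 1) < (c1 powr \<theta> - 1 + k * (c2 - c1)) * (c1 - 1)"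
    using at_c2 c by (intro mult_strict_right_mono) auto
  also have "\<dots> = (c1 powr \<theta> - 1) * (c1 - 1) + k * (c1 - 1) * (c2 - c1)"
    by (simp add: algebra_simps)
  also have "\<dots> < (c1 powr \<theta> - 1) * (c1 - 1) + (c1 powr \<theta> - 1) * (c2 - c1)"
    using at_one c by (intro add_strict_left_mono mult_strict_right_mono) (auto simp: algebra_simps)
  also have "\<dots> = (c1 powr \<theta> - 1) * (c2 - 1)"
    by (simp add: algebra_simps)
  finally show ?thesis using c by (simp add: divide_simps)
qed

lemma weighted_power_mean_le:
  fixes w z :: "'a \<Rightarrow> real" and \<alpha> \<beta> :: real
  assumes w: "\<And>i. i \<in> A \<Longrightarrow> 0 \<le> w i" and w_sum: "(\<Sum>i\<in>A. w i) = 1"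
    and z: "\<And>i. i \<in> A \<Longrightarrow> 0 \<le> z i" and \<alpha>\<beta>: "0 < \<alpha>" "\<alpha> < \<beta>"
  shows "(\<Sum>i\<in>A. w i * z i powr \<alpha>) powr (\<beta> / \<alpha>) \<le> (\<Sum>i\<in>A. w i * z i powr \<beta>)"
proof -
  define m where "m = (\<Sum>i\<in>A. w i * z i powr \<alpha>)"
  define g where "g = \<beta> / \<alpha>"
  have g: "g > 1" using \<alpha>\<beta> by (simp add: g_def)
  have z_powr: "(z i powr \<alpha>) powr g = z i powr \<beta>" for i
    using \<alpha>\<beta> by (simp add: g_def powr_powr)
  have "m \<ge> 0" unfolding m_def using w z by (intro sum_nonneg) auto
  show ?thesis
  proof (cases "m = 0")
    case True
    then show ?thesis using w z by (auto simp: m_def intro: sum_nonneg)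
  next
    case False
    with \<open>m \<ge> 0\<close> have "m > 0" by simp
    \<comment> \<open>Jensen's inequality, via the tangent line of t \<mapsto> t powr g at the mean m.\<close>
    have "(\<Sum>i\<in>A. w i * (m powr g + g * m powr (g - 1) * (z i powr \<alpha> - m)))
        \<le> (\<Sum>i\<in>A. w i * z i powr \<beta>)"
      using w z powr_ge_tangent[OF g \<open>m > 0\<close>]
      by (intro sum_mono mult_left_mono) (auto simp flip: z_powr)
    moreover have "(\<Sum>i\<in>A. w i * (m powr g + g * m powr (g - 1) * (z i powr \<alpha> - m)))
        = m powr g * (\<Sum>i\<in>A. w i)
          + g * m powr (g - 1) * ((\<Sum>i\<in>A. w i * z i powr \<alpha>) - m * (\<Sum>i\<in>A. w i))"
      by (simp add: algebra_simps sum.distrib sum_distrib_left sum_subtractf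
          flip: sum_distrib_right)
    ultimately show ?thesis using w_sum by (simp add: m_def g_def)
  qed
qed

lemma prob_simplex_coord_le_one:
  assumes "x \<in> prob_simplex n" and "i < n"
  shows "x i \<le> 1"
proof -
  have "x i \<le> (\<Sum>j<n. x j)"
    using assms by (intro member_le_sum) (auto simp: prob_simplex_def)
  then show ?thesis using assms(1) by (simp add: prob_simplex_def)
qed

lemma prob_simplex_power_sum_pos:
  assumes "x \<in> prob_simplex n"
  shows "0 < (\<Sum>i<n. x i powr r)"
proof -
  have nonneg: "\<forall>i<n. 0 \<le> x i" and sum_one: "(\<Sum>i<n. x i) = 1"
    using assms by (auto simp: prob_simplex_def)
  obtain i where "i < n" "x i \<noteq> 0"
    using sum_one by (metis lessThan_iff sum.neutral zero_neq_one)
  with nonneg have "0 < x i powr r" by simp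
  also have "\<dots> \<le> (\<Sum>j<n. x j powr r)"
    using \<open>i < n\<close> by (intro member_le_sum) auto
  finally show ?thesis .
qed

lemma prob_simplex_exists_fractional_coord:
  assumes x: "x \<in> prob_simplex n" and not_vertex: "\<forall>i<n. \<exists>j<n. x j \<noteq> unit_vec i j"
  shows "\<exists>i<n. 0 < x i \<and> x i < 1"
proof (rule ccontr)
  assume no_fractional: "\<not> ?thesis"
  have nonneg: "\<forall>i<n. 0 \<le> x i" and sum_one: "(\<Sum>i<n. x i) = 1"
    using x by (auto simp: prob_simplex_def)
  obtain i where i: "i < n" "x i \<noteq> 0"
    using sum_one by (metis lessThan_iff sum.neutral zero_neq_one)
  then have "x i = 1"
    using no_fractional nonneg prob_simplex_coord_le_one[OF x] by force
  have "x j = unit_vec i j" if j: "j < n" for j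
  proof (cases "j = i")
    case True
    then show ?thesis using \<open>x i = 1\<close> by (simp add: unit_vec_def)
  next
    case False
    have "x i + x j = (\<Sum>k\<in>{i, j}. x k)" using False by simp
    also have "\<dots> \<le> (\<Sum>k<n. x k)" using i j nonneg by (intro sum_mono2) auto
    finally have "x j \<le> 0" using \<open>x i = 1\<close> sum_one by simp
    then show ?thesis using nonneg j False by (force simp: unit_vec_def)
  qed
  then show False using not_vertex i(1) by blast
qed

lemma prob_simplex_power_sum_less_one:
  assumes x: "x \<in> prob_simplex n" and not_vertex: "\<forall>i<n. \<exists>j<n. x j \<noteq> unit_vec i j"
    and r: "r > 1"
  shows "(\<Sum>i<n. x i powr r) < 1"
proof -
  obtain i0 where i0: "i0 < n" "0 < x i0" "x i0 < 1"
    using prob_simplex_exists_fractional_coord[OF x not_vertex] by blast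
  have "(\<Sum>i<n. x i powr r) < (\<Sum>i<n. x i)"
  proof (rule sum_strict_mono_ex1)
    show "\<forall>i\<in>{..<n}. x i powr r \<le> x i"
      using x r prob_simplex_coord_le_one[OF x] powr_mono'[of 1 r]
      by (auto simp: prob_simplex_def)
    have "x i0 powr r < x i0 powr 1"
      using i0 r by (intro powr_less_mono') simp_all
    then show "\<exists>i\<in>{..<n}. x i powr r < x i" using i0 by auto
  qed simp
  then show ?thesis using x by (simp add: prob_simplex_def)
qed

lemma prob_simplex_power_sum_gt_barycentre:
  assumes x: "x \<in> prob_simplex n" and not_barycentre: "\<exists>j<n. x j \<noteq> 1 / real n"
    and p: "p > 1"
  shows "real n powr (1 - p) < (\<Sum>i<n. x i powr p)"
proof -
  have nonneg: "\<forall>i<n. 0 \<le> x i" and sum_one: "(\<Sum>i<n. x i) = 1"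
    using x by (auto simp: prob_simplex_def)
  define a where "a = 1 / real n"
  have "n > 0" using sum_one by (metis lessThan_0 sum.empty zero_neq_one gr0I)
  then have "a > 0" by (simp add: a_def)
  have "(\<Sum>i<n. a powr p + p * a powr (p - 1) * (x i - a)) < (\<Sum>i<n. x i powr p)"
  proof (rule sum_strict_mono_ex1)
    show "\<forall>i\<in>{..<n}. a powr p + p * a powr (p - 1) * (x i - a) \<le> x i powr p"
      using powr_ge_tangent[OF p \<open>a > 0\<close>] nonneg by auto
    show "\<exists>i\<in>{..<n}. a powr p + p * a powr (p - 1) * (x i - a) < x i powr p"
      using not_barycentre powr_gt_tangent[OF p \<open>a > 0\<close>] nonneg by (auto simp: a_def)
  qed simp
  moreover have "(\<Sum>i<n. a powr p + p * a powr (p - 1) * (x i - a))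
      = real n * a powr p + p * a powr (p - 1) * ((\<Sum>i<n. x i) - real n * a)"
    by (simp add: sum.distrib sum_subtractf algebra_simps flip: sum_distrib_left sum_distrib_right)
  moreover have "real n * a = 1" and "real n * a powr p = real n powr (1 - p)"
    using \<open>n > 0\<close> by (simp_all add: a_def powr_divide powr_diff)
  ultimately show ?thesis using sum_one by simp
qed

definition renyi_entropy :: "nat \<Rightarrow> real \<Rightarrow> (nat \<Rightarrow> real) \<Rightarrow> real" where
  "renyi_entropy n r x = ln (\<Sum>i<n. x i powr r) / (1 - r)"

lemma renyi_entropy_pos:
  assumes "x \<in> prob_simplex n" and "\<forall>i<n. \<exists>j<n. x j \<noteq> unit_vec i j" and "r > 1"
  shows "0 < renyi_entropy n r x"
proof -
  have "ln (\<Sum>i<n. x i powr r) < 0"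
    using prob_simplex_power_sum_pos[OF assms(1)] prob_simplex_power_sum_less_one[OF assms]
    by simp
  then show ?thesis using \<open>r > 1\<close> by (simp add: renyi_entropy_def divide_neg_neg)
qed

lemma renyi_entropy_less_ln_dim:
  assumes "x \<in> prob_simplex n" and "\<exists>j<n. x j \<noteq> 1 / real n" and p: "p > 1"
  shows "renyi_entropy n p x < ln (real n)"
proof -
  have "real n > 0"
    using assms(1) by (auto simp: prob_simplex_def intro: gr0I)
  have "(1 - p) * ln (real n) = ln (real n powr (1 - p))"
    using \<open>real n > 0\<close> by (simp add: ln_powr)
  also have "\<dots> < ln (\<Sum>i<n. x i powr p)"
    using prob_simplex_power_sum_gt_barycentre[OF assms] prob_simplex_power_sum_pos[OF assms(1)]
      \<open>real n > 0\<close>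
    by (subst ln_less_cancel_iff) auto
  finally have "(1 - p) * ln (real n) < ln (\<Sum>i<n. x i powr p)" .
  then show ?thesis using p by (simp add: renyi_entropy_def divide_simps algebra_simps)
qed

lemma renyi_entropy_antimono:
  assumes x: "x \<in> prob_simplex n" and pq: "1 < p" "p < q"
  shows "renyi_entropy n q x \<le> renyi_entropy n p x"
proof -
  define S where "S r = (\<Sum>i<n. x i powr r)" for r
  have S_pos: "0 < S r" for r
    using prob_simplex_power_sum_pos[OF x] by (simp add: S_def)
  have S_weighted: "S r = (\<Sum>i\<in>{..<n}. x i * x i powr (r - 1))" for r
    using x by (simp add: S_def prob_simplex_def powr_mult_base)
  have "S p powr ((q - 1) / (p - 1)) \<le> S q"
    unfolding S_weighted using x pq
    by (intro weighted_power_mean_le) (auto simp: prob_simplex_def)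
  then have "ln (S p powr ((q - 1) / (p - 1))) \<le> ln (S q)"
    using S_pos[of p] S_pos[of q] by (subst ln_le_cancel_iff) auto
  then have "(q - 1) / (p - 1) * ln (S p) \<le> ln (S q)"
    using S_pos[of p] by (simp add: ln_powr)
  then have "ln (S q) / (1 - q) \<le> ln (S p) / (1 - p)"
    using pq by (simp add: divide_simps algebra_simps)
  then show ?thesis by (simp add: renyi_entropy_def S_def)
qed

lemma inverse_pnorm_eq_exp_renyi_entropy:
  assumes x: "x \<in> prob_simplex n" and r: "r > 1"
  shows "1 / pnorm n r x = exp ((1 - 1 / r) * renyi_entropy n r x)"
proof -
  define S where "S = (\<Sum>i<n. x i powr r)"
  have "S > 0" using prob_simplex_power_sum_pos[OF x] by (simp add: S_def)
  have "(1 - 1 / r) * renyi_entropy n r x = - (ln S / r)"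
    using r by (simp add: renyi_entropy_def S_def field_simps)
  moreover have "pnorm n r x = exp (ln S / r)"
    using \<open>S > 0\<close> by (simp add: pnorm_def S_def powr_def)
  ultimately show ?thesis by (simp add: exp_minus inverse_eq_divide)
qed

lemma Ffun_eq_powr_chord_slope:
  assumes x: "x \<in> prob_simplex n" and n: "n > 1" and r: "r > 1"
  shows "Ffun n x r = ((real n powr (1 - 1 / r)) powr (renyi_entropy n r x / ln (real n)) - 1)
    / (real n powr (1 - 1 / r) - 1)"
proof -
  define N where "N = pnorm n r x"
  have "ln (real n) > 0" using n by simp
  have "N > 0" using prob_simplex_power_sum_pos[OF x, of r] by (simp add: N_def pnorm_def)
  have "1 / N - 1 = (1 - N) / N" using \<open>N > 0\<close> by (simp add: field_simps)
  then have "Ffun n x r = (1 / N - 1) / (real n powr (1 - 1 / r) - 1)"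
    by (simp add: Ffun_def Dp_def N_def[symmetric] divide_divide_eq_left mult.commute)
  also have "1 / N = exp ((1 - 1 / r) * renyi_entropy n r x)"
    using inverse_pnorm_eq_exp_renyi_entropy[OF x r] by (simp add: N_def)
  also have "\<dots> = (real n powr (1 - 1 / r)) powr (renyi_entropy n r x / ln (real n))"
    using n \<open>ln (real n) > 0\<close> by (simp add: powr_powr powr_def)
  finally show ?thesis .
qed

theorem proposition4:
  fixes n :: nat and x :: "nat \<Rightarrow> real"
  assumes "x \<in> prob_simplex n"
    and "\<forall>i<n. \<exists>j<n. x j \<noteq> unit_vec i j"
    and "\<exists>j<n. x j \<noteq> 1 / real n"
  shows "\<forall>p q. 2 \<le> p \<longrightarrow> p < q \<longrightarrow> Ffun n x q < Ffun n x p"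
proof (intro allI impI)
  fix p q :: real
  assume "2 \<le> p" and "p < q"
  then have p: "p > 1" and q: "q > 1" by auto
  define \<theta> where "\<theta> r = renyi_entropy n r x / ln (real n)" for r
  define c where "c r = real n powr (1 - 1 / r)" for r
  have H_p: "0 < renyi_entropy n p x" "renyi_entropy n p x < ln (real n)"
    using renyi_entropy_pos[OF assms(1,2) p] renyi_entropy_less_ln_dim[OF assms(1,3) p] by auto
  then have "ln (real n) > 0" by linarith
  then have "n > 1" by (cases "n = 0") (auto dest: ln_gt_zero_imp_gt_one)
  have \<theta>_p: "0 < \<theta> p" "\<theta> p < 1" using H_p by (auto simp: \<theta>_def divide_simps)
  have "\<theta> q \<le> \<theta> p"
    using renyi_entropy_antimono[OF assms(1) p \<open>p < q\<close>] \<open>n > 1\<close> by (simp add: \<theta>_def divide_right_mono)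
  have "1 / q < 1 / p" using p \<open>p < q\<close> by (simp add: divide_strict_left_mono)
  then have c: "1 < c p" "c p < c q"
    using \<open>n > 1\<close> p by (simp_all add: c_def gr_one_powr powr_less_mono)
  have "Ffun n x q = (c q powr \<theta> q - 1) / (c q - 1)"
    using Ffun_eq_powr_chord_slope[OF assms(1) \<open>n > 1\<close> q] by (simp add: c_def \<theta>_def)
  also have "\<dots> \<le> (c q powr \<theta> p - 1) / (c q - 1)"
    using c \<open>\<theta> q \<le> \<theta> p\<close> by (intro divide_right_mono diff_right_mono powr_mono) auto
  also have "\<dots> < (c p powr \<theta> p - 1) / (c p - 1)"
    using powr_chord_slope_from_one_decreasing[OF \<theta>_p c] .
  also have "\<dots> = Ffun n x p"
    using Ffun_eq_powr_chord_slope[OF assms(1) \<open>n > 1\<close> p] by (simp add: c_def \<theta>_def)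
  finally show "Ffun n x q < Ffun n x p" .
qed

end
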